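(* Let $\mathcal M=(\mathbf M^{(\lambda)})_{\lambda>0}$ be a weight matrix on $\mathbb N_0^d$. (i) If for every $\lambda>0$ there exist $\kappa\ge\lambda$ and $A\ge1$ with $M^{(\lambda)}_{\alpha+e_j}\le A^{|\alpha|+1}M^{(\kappa)}_\alpha$ for all $\alpha\in\mathbb N_0^d$, $1\le j\le d$, then for every $\lambda>0$ there exist $\kappa\ge\lambda$ and $B_1,B_2\ge1$ such that for all $t\in\mathbb R^d$ $$(1+|t|)^{2(d+1)}\exp\omega_{\mathbf M^{(\kappa)}}(t)\le B_1\exp\omega_{\mathbf M^{(\lambda)}}(B_2t).$$ (ii) If for every $\lambda>0$ there exist $0<\kappa\le\lambda$ and $A\ge1$ with $M^{(\kappa)}_{\alpha+e_j}\le A^{|\alpha|+1}M^{(\lambda)}_\alpha$ for all $\alpha\in\mathbb N_0^d$, $1\le j\le d$, then for every $\lambda>0$ there exist $0<\kappa\le\lambda$ and $B_1,B_2\ge1$ such that for all $t\in\mathbb R^d$ $$(1+|t|)^{2(d+1)}\exp\omega_{\mathbf M^{(\lambda)}}(t)\le B_1\exp\omega_{\mathbf M^{(\kappa)}}(B_2t).$$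
   Context: A weight matrix is a family $\mathcal M=(\mathbf M^{(\lambda)})_{\lambda>0}$ with $\mathbf M^{(\lambda)}=(M^{(\lambda)}_\alpha)_{\alpha\in\mathbb N_0^d}$ sequences of positive reals, $M^{(\lambda)}_0=1$, and $M^{(\lambda)}_\alpha\le M^{(\kappa)}_\alpha$ for all $\alpha$ whenever $0<\lambda\le\kappa$. $e_j$ is the $j$-th unit vector, $|\alpha|=\sum\alpha_j$, $|t|$ the Euclidean norm. The associated weight function of $\mathbf M=(M_\alpha)$ is $\omega_{\mathbf M}(t)=\sup_{\alpha\in\mathbb N^d_{0,t}}\log\frac{|t^\alpha|}{M_\alpha}$ ($t\in\mathbb R^d$, possibly $+\infty$), where $\mathbb N^d_{0,t}=\{\alpha:\alpha_j=0\text{ whenever }t_j=0\}$ and $0^0:=1$. *)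

theory Defs
  imports "HOL-Analysis.Analysis" "HOL-Library.Extended_Real"
begin

text \<open>Multi-indices in N_0^d are functions 'n \<Rightarrow> nat, d = CARD('n); points of R^d are real^'n.\<close>

definition mi_len :: "('n::finite \<Rightarrow> nat) \<Rightarrow> nat" where
  "mi_len \<alpha> = (\<Sum>j\<in>UNIV. \<alpha> j)"

definition mi_unit :: "'n::finite \<Rightarrow> ('n \<Rightarrow> nat)" where
  "mi_unit j = (\<lambda>i. if i = j then 1 else 0)"

definition mi_pow :: "real^'n::finite \<Rightarrow> ('n \<Rightarrow> nat) \<Rightarrow> real" where
  "mi_pow t \<alpha> = (\<Prod>j\<in>UNIV. (t $ j) ^ (\<alpha> j))"

definition weight_matrix :: "(real \<Rightarrow> ('n::finite \<Rightarrow> nat) \<Rightarrow> real) \<Rightarrow> bool" where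
  "weight_matrix M \<longleftrightarrow>
     (\<forall>l>0. (\<forall>\<alpha>. M l \<alpha> > 0) \<and> M l (\<lambda>_. 0) = 1) \<and>
     (\<forall>l k \<alpha>. 0 < l \<and> l \<le> k \<longrightarrow> M l \<alpha> \<le> M k \<alpha>)"

definition assoc_weight :: "(('n::finite \<Rightarrow> nat) \<Rightarrow> real) \<Rightarrow> real^'n \<Rightarrow> ereal" where
  "assoc_weight M t =
     (SUP \<alpha> \<in> {\<alpha>. \<forall>j. t $ j = 0 \<longrightarrow> \<alpha> j = 0}. ereal (ln (\<bar>mi_pow t \<alpha>\<bar> / M \<alpha>)))"

fun exp_ereal :: "ereal \<Rightarrow> ereal" where
  "exp_ereal (ereal x) = ereal (exp x)"
| "exp_ereal PInfty = PInfty"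
| "exp_ereal MInfty = 0"

end

theory Submission
  imports Defs
begin

text \<open>
  Let \<alpha> be a multi-index with t^\<alpha> \<noteq> 0. The shift hypothesis
  M1(\<alpha> + e_j) \<le> A^(|\<alpha>|+1) M2(\<alpha>) gives
  |t_j| |t^\<alpha>| / M2(\<alpha>) \<le> |(A t)^(\<alpha> + e_j)| / M1(\<alpha> + e_j) \<le> exp \<omega>_M1(A t),
  and M1 \<le> M2 gives the same bound for |t^\<alpha>| / M2(\<alpha>). Summing over j and using
  |t| \<le> \<Sum>_j |t_j| yields (1 + |t|) exp \<omega>_M2(t) \<le> (d + 1) exp \<omega>_M1(A t), so every
  application of the hypothesis gains one factor 1 + |t|. Along a chain of 2(d + 1)
  parameters these estimates compose: constants and dilations multiply, and
  1 + |t| \<le> 1 + |B t| for B \<ge> 1.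
\<close>

abbreviation exp_weight :: "(('n::finite \<Rightarrow> nat) \<Rightarrow> real) \<Rightarrow> real^'n \<Rightarrow> ereal" where
  "exp_weight M t \<equiv> exp_ereal (assoc_weight M t)"

definition mi_supported :: "real^'n::finite \<Rightarrow> ('n \<Rightarrow> nat) set" where
  "mi_supported t = {\<alpha>. \<forall>j. t $ j = 0 \<longrightarrow> \<alpha> j = 0}"

lemma assoc_weight_eq_SUP:
  "assoc_weight M t = (SUP \<alpha> \<in> mi_supported t. ereal (ln (\<bar>mi_pow t \<alpha>\<bar> / M \<alpha>)))"
  unfolding assoc_weight_def mi_supported_def ..

lemma zero_mi_supported: "(\<lambda>_. 0) \<in> mi_supported t"
  by (simp add: mi_supported_def)

lemma mi_supported_scaleR: "c \<noteq> 0 \<Longrightarrow> mi_supported (c *\<^sub>R t) = mi_supported t"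
  by (simp add: mi_supported_def)

lemma mi_supported_add_unit:
  "\<alpha> \<in> mi_supported t \<Longrightarrow> t $ j \<noteq> 0 \<Longrightarrow> (\<lambda>i. \<alpha> i + mi_unit j i) \<in> mi_supported t"
  by (auto simp: mi_supported_def mi_unit_def)

lemma mi_pow_nonzero: "\<alpha> \<in> mi_supported t \<Longrightarrow> mi_pow t \<alpha> \<noteq> 0"
  unfolding mi_pow_def mi_supported_def by (auto simp: prod_zero_iff)

lemma mi_pow_scaleR: "mi_pow (c *\<^sub>R t) \<alpha> = c ^ mi_len \<alpha> * mi_pow t \<alpha>"
  unfolding mi_pow_def mi_len_def by (simp add: power_mult_distrib prod.distrib power_sum)

lemma mi_pow_add_unit: "mi_pow t (\<lambda>i. \<alpha> i + mi_unit j i) = mi_pow t \<alpha> * t $ j"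
proof -
  have "mi_pow t (\<lambda>i. \<alpha> i + mi_unit j i) = (\<Prod>i\<in>UNIV. (t $ i) ^ \<alpha> i * (if i = j then t $ i else 1))"
    unfolding mi_pow_def mi_unit_def by (intro prod.cong) (auto simp: power_add)
  also have "\<dots> = mi_pow t \<alpha> * t $ j"
    unfolding mi_pow_def prod.distrib by (simp add: prod.If_cases)
  finally show ?thesis .
qed

lemma mi_len_add_unit: "mi_len (\<lambda>i. \<alpha> i + mi_unit j i) = mi_len \<alpha> + 1"
  unfolding mi_len_def mi_unit_def by (simp add: sum.distrib)

lemma exp_ereal_infinity [simp]: "exp_ereal \<infinity> = \<infinity>" "exp_ereal (-\<infinity>) = 0"
  using exp_ereal.simps(2,3) by simp_all

lemma exp_ereal_nonneg: "0 \<le> exp_ereal x"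
  by (cases x) auto

lemma exp_weight_ge:
  assumes "\<alpha> \<in> mi_supported t" and "0 < M \<alpha>"
  shows "ereal (\<bar>mi_pow t \<alpha>\<bar> / M \<alpha>) \<le> exp_weight M t"
proof -
  have pos: "0 < \<bar>mi_pow t \<alpha>\<bar> / M \<alpha>"
    using mi_pow_nonzero[OF assms(1)] assms(2) by simp
  have le: "ereal (ln (\<bar>mi_pow t \<alpha>\<bar> / M \<alpha>)) \<le> assoc_weight M t"
    unfolding assoc_weight_eq_SUP by (rule SUP_upper[OF assms(1)])
  show ?thesis
  proof (cases "assoc_weight M t")
    case (real r)
    with le have "ln (\<bar>mi_pow t \<alpha>\<bar> / M \<alpha>) \<le> r"
      by simp
    with pos real show ?thesis
      by (metis exp_ereal.simps(1) ereal_less_eq(3) exp_le_cancel_iff exp_ln)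
  qed (use le in auto)
qed

lemma exp_weight_le:
  assumes M_pos: "\<And>\<alpha>. 0 < M \<alpha>"
    and bound: "\<And>\<alpha>. \<alpha> \<in> mi_supported t \<Longrightarrow> \<bar>mi_pow t \<alpha>\<bar> / M \<alpha> \<le> x"
  shows "exp_weight M t \<le> ereal x"
proof -
  have ratio_pos: "0 < \<bar>mi_pow t \<alpha>\<bar> / M \<alpha>" if "\<alpha> \<in> mi_supported t" for \<alpha>
    using mi_pow_nonzero[OF that] M_pos[of \<alpha>] by simp
  have x_pos: "0 < x"
    using ratio_pos[OF zero_mi_supported] bound[OF zero_mi_supported] by linarith
  have "assoc_weight M t \<le> ereal (ln x)"
    unfolding assoc_weight_eq_SUP using ratio_pos bound by (intro SUP_least) (simp add: ln_mono)
  with x_pos show ?thesis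
    by (cases "assoc_weight M t") (auto simp: ln_ge_iff)
qed

lemma mult_exp_weight_le:
  assumes c_pos: "0 < c" and M_pos: "\<And>\<alpha>. 0 < M \<alpha>"
    and bound: "\<And>\<alpha>. \<alpha> \<in> mi_supported t \<Longrightarrow> ereal (c * (\<bar>mi_pow t \<alpha>\<bar> / M \<alpha>)) \<le> X"
  shows "ereal c * exp_weight M t \<le> X"
proof (cases X)
  case (real x)
  have "\<bar>mi_pow t \<alpha>\<bar> / M \<alpha> \<le> x / c" if "\<alpha> \<in> mi_supported t" for \<alpha>
    using bound[OF that] real c_pos by (simp add: field_simps)
  then have "exp_weight M t \<le> ereal (x / c)"
    by (rule exp_weight_le[OF M_pos])
  then have "ereal c * exp_weight M t \<le> ereal c * ereal (x / c)"
    using c_pos by (intro ereal_mult_left_mono) auto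
  with real c_pos show ?thesis by simp
next
  case MInf
  with bound[OF zero_mi_supported] show ?thesis by simp
qed simp

lemma one_plus_norm_mult_le:
  fixes t :: "real^'n::finite"
  assumes "0 \<le> f" and f_le: "ereal f \<le> X" and coord_le: "\<And>j. ereal (\<bar>t $ j\<bar> * f) \<le> X"
  shows "ereal ((1 + norm t) / (CARD('n) + 1) * f) \<le> X"
proof (cases X)
  case (real x)
  have "(1 + norm t) * f \<le> (1 + (\<Sum>j\<in>UNIV. \<bar>t $ j\<bar>)) * f"
    using norm_le_l1_cart[of t] \<open>0 \<le> f\<close> by (intro mult_right_mono) auto
  also have "\<dots> = f + (\<Sum>j\<in>UNIV. \<bar>t $ j\<bar> * f)"
    by (simp add: distrib_right sum_distrib_right)
  also have "\<dots> \<le> x + (\<Sum>j\<in>(UNIV::'n set). x)"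
    using f_le coord_le real by (intro add_mono sum_mono) auto
  also have "\<dots> = (CARD('n) + 1) * x"
    by (simp add: algebra_simps)
  finally have "(1 + norm t) / (CARD('n) + 1) * f \<le> x"
    by (simp add: field_simps add_pos_nonneg)
  with real show ?thesis by simp
qed (use f_le in auto)

lemma exp_weight_shift:
  fixes M1 M2 :: "('n::finite \<Rightarrow> nat) \<Rightarrow> real"
  assumes M1_pos: "\<And>\<alpha>. 0 < M1 \<alpha>" and M2_pos: "\<And>\<alpha>. 0 < M2 \<alpha>"
    and M1_le_M2: "\<And>\<alpha>. M1 \<alpha> \<le> M2 \<alpha>" and A: "1 \<le> A"
    and shift: "\<And>\<alpha> j. M1 (\<lambda>i. \<alpha> i + mi_unit j i) \<le> A ^ (mi_len \<alpha> + 1) * M2 \<alpha>"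
  shows "ereal ((1 + norm t) / (CARD('n) + 1)) * exp_weight M2 t \<le> exp_weight M1 (A *\<^sub>R t)"
proof (rule mult_exp_weight_le[OF _ M2_pos])
  show "0 < (1 + norm t) / (CARD('n) + 1)"
    by (simp add: add_pos_nonneg)
next
  fix \<alpha> assume \<alpha>: "\<alpha> \<in> mi_supported t"
  have supp_At: "mi_supported (A *\<^sub>R t) = mi_supported t"
    using A by (intro mi_supported_scaleR) simp
  define f where "f = \<bar>mi_pow t \<alpha>\<bar> / M2 \<alpha>"
  have "f \<le> \<bar>mi_pow t \<alpha>\<bar> / M1 \<alpha>"
    unfolding f_def using M1_pos[of \<alpha>] M1_le_M2[of \<alpha>] by (intro divide_left_mono) auto
  also have "\<dots> \<le> \<bar>mi_pow (A *\<^sub>R t) \<alpha>\<bar> / M1 \<alpha>"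
    using M1_pos[of \<alpha>] A
    by (intro divide_right_mono) (auto simp: mi_pow_scaleR abs_mult mult_le_cancel_right1)
  also have "ereal \<dots> \<le> exp_weight M1 (A *\<^sub>R t)"
    using \<alpha> supp_At M1_pos by (intro exp_weight_ge) auto
  finally have f_le: "ereal f \<le> exp_weight M1 (A *\<^sub>R t)"
    by simp
  have "ereal (\<bar>t $ j\<bar> * f) \<le> exp_weight M1 (A *\<^sub>R t)" for j
  proof (cases "t $ j = 0")
    case False
    define \<beta> where "\<beta> = (\<lambda>i. \<alpha> i + mi_unit j i)"
    have "\<bar>t $ j\<bar> * f = A ^ (mi_len \<alpha> + 1) * \<bar>mi_pow t \<alpha> * t $ j\<bar> / (A ^ (mi_len \<alpha> + 1) * M2 \<alpha>)"
      unfolding f_def using A M2_pos[of \<alpha>] by (simp add: abs_mult field_simps)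
    also have "\<dots> \<le> A ^ (mi_len \<alpha> + 1) * \<bar>mi_pow t \<alpha> * t $ j\<bar> / M1 \<beta>"
      using shift[of \<alpha> j] M1_pos[of \<beta>] A unfolding \<beta>_def by (intro divide_left_mono) auto
    also have "\<dots> = \<bar>mi_pow (A *\<^sub>R t) \<beta>\<bar> / M1 \<beta>"
      using A unfolding \<beta>_def by (simp add: mi_pow_scaleR mi_pow_add_unit mi_len_add_unit abs_mult)
    also have "ereal \<dots> \<le> exp_weight M1 (A *\<^sub>R t)"
      using mi_supported_add_unit[OF \<alpha> False] supp_At M1_pos unfolding \<beta>_def
      by (intro exp_weight_ge) auto
    finally show ?thesis
      by simp
  qed (simp add: exp_ereal_nonneg zero_ereal_def[symmetric])
  with f_le show "ereal ((1 + norm t) / (CARD('n) + 1) * f) \<le> exp_weight M1 (A *\<^sub>R t)"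
    using M2_pos[of \<alpha>] unfolding f_def by (intro one_plus_norm_mult_le) auto
qed

definition poly_dominated_by :: "nat \<Rightarrow> (real^'n::finite \<Rightarrow> ereal) \<Rightarrow> (real^'n \<Rightarrow> ereal) \<Rightarrow> bool" where
  "poly_dominated_by n F G \<longleftrightarrow>
     (\<exists>C>0. \<exists>B\<ge>1. \<forall>t. ereal (C * (1 + norm t) ^ n) * F t \<le> G (B *\<^sub>R t))"

lemma poly_dominated_by_0: "poly_dominated_by 0 F F"
  unfolding poly_dominated_by_def by (auto intro!: exI[of _ 1])

lemma poly_dominated_by_trans:
  assumes FG: "poly_dominated_by n F G" and GH: "poly_dominated_by m G H"
    and G_nonneg: "\<And>t. 0 \<le> G t"
  shows "poly_dominated_by (n + m) F H"
proof -
  obtain C1 B1 where C1: "0 < C1" "1 \<le> B1"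
    and FG_le: "\<And>t. ereal (C1 * (1 + norm t) ^ n) * F t \<le> G (B1 *\<^sub>R t)"
    using FG unfolding poly_dominated_by_def by blast
  obtain C2 B2 where C2: "0 < C2" "1 \<le> B2"
    and GH_le: "\<And>t. ereal (C2 * (1 + norm t) ^ m) * G t \<le> H (B2 *\<^sub>R t)"
    using GH unfolding poly_dominated_by_def by blast
  have "ereal (C2 * C1 * (1 + norm t) ^ (n + m)) * F t \<le> H ((B2 * B1) *\<^sub>R t)" for t
  proof -
    have "norm t \<le> norm (B1 *\<^sub>R t)"
      using C1 by (simp add: mult_le_cancel_right1)
    then have "(1 + norm t) ^ m \<le> (1 + norm (B1 *\<^sub>R t)) ^ m"
      by (simp add: power_mono)
    have "ereal (C2 * C1 * (1 + norm t) ^ (n + m)) * F t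
        = ereal (C2 * (1 + norm t) ^ m) * (ereal (C1 * (1 + norm t) ^ n) * F t)"
      by (simp add: power_add mult_ac)
    also have "\<dots> \<le> ereal (C2 * (1 + norm t) ^ m) * G (B1 *\<^sub>R t)"
      using C2 by (intro ereal_mult_left_mono FG_le) auto
    also have "\<dots> \<le> ereal (C2 * (1 + norm (B1 *\<^sub>R t)) ^ m) * G (B1 *\<^sub>R t)"
      using \<open>(1 + norm t) ^ m \<le> _\<close> C2 by (intro ereal_mult_right_mono G_nonneg) auto
    also have "\<dots> \<le> H ((B2 * B1) *\<^sub>R t)"
      using GH_le[of "B1 *\<^sub>R t"] by simp
    finally show ?thesis .
  qed
  moreover have "0 < C2 * C1" and "1 \<le> B2 * B1"
    using C1 C2 mult_mono[of 1 B2 1 B1] by simp_all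
  ultimately show ?thesis
    unfolding poly_dominated_by_def by blast
qed

lemma poly_dominated_byD:
  assumes "poly_dominated_by n F G" and G_nonneg: "\<And>t. 0 \<le> G t"
  shows "\<exists>B1\<ge>1. \<exists>B2\<ge>1. \<forall>t. ereal ((1 + norm t) ^ n) * F t \<le> ereal B1 * G (B2 *\<^sub>R t)"
proof -
  obtain C B where C: "0 < C" "1 \<le> B"
    and le: "\<And>t. ereal (C * (1 + norm t) ^ n) * F t \<le> G (B *\<^sub>R t)"
    using assms(1) unfolding poly_dominated_by_def by blast
  have "ereal ((1 + norm t) ^ n) * F t \<le> ereal (max 1 (1 / C)) * G (B *\<^sub>R t)" for t
  proof -
    have "ereal ((1 + norm t) ^ n) * F t = ereal (1 / C) * (ereal (C * (1 + norm t) ^ n) * F t)"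
      using C by (simp add: mult.assoc[symmetric])
    also have "\<dots> \<le> ereal (1 / C) * G (B *\<^sub>R t)"
      using C by (intro ereal_mult_left_mono le) auto
    also have "\<dots> \<le> ereal (max 1 (1 / C)) * G (B *\<^sub>R t)"
      by (intro ereal_mult_right_mono G_nonneg) auto
    finally show ?thesis .
  qed
  with C show ?thesis
    by (intro exI[of _ "max 1 (1 / C)"] exI[of _ B]) auto
qed

lemma poly_dominated_by_shift:
  fixes M1 M2 :: "('n::finite \<Rightarrow> nat) \<Rightarrow> real"
  assumes "\<And>\<alpha>. 0 < M1 \<alpha>" "\<And>\<alpha>. 0 < M2 \<alpha>" "\<And>\<alpha>. M1 \<alpha> \<le> M2 \<alpha>" "1 \<le> A"
    and "\<And>\<alpha> j. M1 (\<lambda>i. \<alpha> i + mi_unit j i) \<le> A ^ (mi_len \<alpha> + 1) * M2 \<alpha>"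
  shows "poly_dominated_by 1 (exp_weight M2) (exp_weight M1)"
  unfolding poly_dominated_by_def using exp_weight_shift[OF assms] \<open>1 \<le> A\<close>
  by (intro exI[of _ "1 / (CARD('n) + 1)"] exI[of _ A]) auto

lemma iterate_step_exists:
  assumes step: "\<And>l. l \<in> S \<Longrightarrow> \<exists>k\<in>S. P 1 l k"
    and refl: "\<And>l. P 0 l l"
    and trans: "\<And>n l k k'. P n l k \<Longrightarrow> P 1 k k' \<Longrightarrow> P (Suc n) l k'"
    and "l \<in> S"
  shows "\<exists>k\<in>S. P n l k"
proof (induction n)
  case 0
  with refl \<open>l \<in> S\<close> show ?case by blast
next
  case (Suc n)
  then obtain k k' where "k \<in> S" "P n l k" "k' \<in> S" "P 1 k k'"
    using step by blast
  with trans show ?case by blast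
qed

lemma weight_matrixD:
  assumes "weight_matrix M"
  shows "0 < l \<Longrightarrow> 0 < M l \<alpha>"
    and "0 < l \<Longrightarrow> l \<le> k \<Longrightarrow> M l \<alpha> \<le> M k \<alpha>"
  using assms unfolding weight_matrix_def by auto

lemma weight_matrix_poly_dominated_by_up:
  assumes wm: "weight_matrix M"
    and shift: "\<forall>l>0. \<exists>k\<ge>l. \<exists>A\<ge>1. \<forall>\<alpha> j.
      M l (\<lambda>i. \<alpha> i + mi_unit j i) \<le> A ^ (mi_len \<alpha> + 1) * M k \<alpha>"
    and "0 < l"
  shows "\<exists>k\<ge>l. poly_dominated_by n (exp_weight (M k)) (exp_weight (M l))"
proof -
  let ?P = "\<lambda>n l k. l \<le> k \<and> poly_dominated_by n (exp_weight (M k)) (exp_weight (M l))"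
  have "\<exists>k\<in>{0<..}. ?P n l k"
  proof (rule iterate_step_exists[where P = ?P])
    fix l :: real assume l: "l \<in> {0<..}"
    then obtain k A where "l \<le> k" "1 \<le> A"
      and "\<And>\<alpha> j. M l (\<lambda>i. \<alpha> i + mi_unit j i) \<le> A ^ (mi_len \<alpha> + 1) * M k \<alpha>"
      using shift by auto
    moreover from this l have "poly_dominated_by 1 (exp_weight (M k)) (exp_weight (M l))"
      by (intro poly_dominated_by_shift) (auto intro: weight_matrixD[OF wm])
    ultimately show "\<exists>k\<in>{0<..}. ?P 1 l k"
      using l by auto
  next
    show "?P 0 l l" for l
      by (simp add: poly_dominated_by_0)
  next
    show "?P (Suc n) l k'" if "?P n l k" and "?P 1 k k'" for n l k k'
      using that poly_dominated_by_trans[of 1 _ _ n] exp_ereal_nonneg by auto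
  qed (use \<open>0 < l\<close> in simp)
  then show ?thesis
    by blast
qed

lemma weight_matrix_poly_dominated_by_down:
  assumes wm: "weight_matrix M"
    and shift: "\<forall>l>0. \<exists>k. 0 < k \<and> k \<le> l \<and> (\<exists>A\<ge>1. \<forall>\<alpha> j.
      M k (\<lambda>i. \<alpha> i + mi_unit j i) \<le> A ^ (mi_len \<alpha> + 1) * M l \<alpha>)"
    and "0 < l"
  shows "\<exists>k. 0 < k \<and> k \<le> l \<and> poly_dominated_by n (exp_weight (M l)) (exp_weight (M k))"
proof -
  let ?P = "\<lambda>n l k. k \<le> l \<and> poly_dominated_by n (exp_weight (M l)) (exp_weight (M k))"
  have "\<exists>k\<in>{0<..}. ?P n l k"
  proof (rule iterate_step_exists[where P = ?P])
    fix l :: real assume "l \<in> {0<..}"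
    then obtain k A where "0 < k" "k \<le> l" "1 \<le> A"
      and "\<And>\<alpha> j. M k (\<lambda>i. \<alpha> i + mi_unit j i) \<le> A ^ (mi_len \<alpha> + 1) * M l \<alpha>"
      using shift by auto
    moreover from this have "poly_dominated_by 1 (exp_weight (M l)) (exp_weight (M k))"
      by (intro poly_dominated_by_shift) (auto intro: weight_matrixD[OF wm])
    ultimately show "\<exists>k\<in>{0<..}. ?P 1 l k"
      by auto
  next
    show "?P 0 l l" for l
      by (simp add: poly_dominated_by_0)
  next
    show "?P (Suc n) l k'" if "?P n l k" and "?P 1 k k'" for n l k k'
      using that poly_dominated_by_trans[of n _ _ 1] exp_ereal_nonneg by auto
  qed (use \<open>0 < l\<close> in simp)
  then show ?thesis
    by auto
qed

theorem lemma3p2: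
  fixes M :: "real \<Rightarrow> ('n::finite \<Rightarrow> nat) \<Rightarrow> real"
  assumes wm: "weight_matrix M"
  shows
   "((\<forall>l>0. \<exists>k\<ge>l. \<exists>A\<ge>1. \<forall>\<alpha> j.
        M l (\<lambda>i. \<alpha> i + mi_unit j i) \<le> A ^ (mi_len \<alpha> + 1) * M k \<alpha>)
     \<longrightarrow> (\<forall>l>0. \<exists>k\<ge>l. \<exists>B1\<ge>1. \<exists>B2\<ge>1. \<forall>t::real^'n.
        ereal ((1 + norm t) ^ (2 * (CARD('n) + 1))) * exp_ereal (assoc_weight (M k) t)
          \<le> ereal B1 * exp_ereal (assoc_weight (M l) (B2 *\<^sub>R t))))
   \<and>
    ((\<forall>l>0. \<exists>k. 0 < k \<and> k \<le> l \<and> (\<exists>A\<ge>1. \<forall>\<alpha> j.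
        M k (\<lambda>i. \<alpha> i + mi_unit j i) \<le> A ^ (mi_len \<alpha> + 1) * M l \<alpha>))
     \<longrightarrow> (\<forall>l>0. \<exists>k. 0 < k \<and> k \<le> l \<and> (\<exists>B1\<ge>1. \<exists>B2\<ge>1. \<forall>t::real^'n.
        ereal ((1 + norm t) ^ (2 * (CARD('n) + 1))) * exp_ereal (assoc_weight (M l) t)
          \<le> ereal B1 * exp_ereal (assoc_weight (M k) (B2 *\<^sub>R t)))))"
proof (intro conjI impI allI)
  fix l :: real
  assume "\<forall>l>0. \<exists>k\<ge>l. \<exists>A\<ge>1. \<forall>\<alpha> j.
    M l (\<lambda>i. \<alpha> i + mi_unit j i) \<le> A ^ (mi_len \<alpha> + 1) * M k \<alpha>" and "0 < l"
  then obtain k where "l \<le> k"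
    and "poly_dominated_by (2 * (CARD('n) + 1)) (exp_weight (M k)) (exp_weight (M l))"
    using weight_matrix_poly_dominated_by_up[OF wm] by blast
  with poly_dominated_byD[OF _ exp_ereal_nonneg]
  show "\<exists>k\<ge>l. \<exists>B1\<ge>1. \<exists>B2\<ge>1. \<forall>t::real^'n.
    ereal ((1 + norm t) ^ (2 * (CARD('n) + 1))) * exp_weight (M k) t
      \<le> ereal B1 * exp_weight (M l) (B2 *\<^sub>R t)"
    by blast
next
  fix l :: real
  assume "\<forall>l>0. \<exists>k. 0 < k \<and> k \<le> l \<and> (\<exists>A\<ge>1. \<forall>\<alpha> j.
    M k (\<lambda>i. \<alpha> i + mi_unit j i) \<le> A ^ (mi_len \<alpha> + 1) * M l \<alpha>)" and "0 < l"
  then obtain k where "0 < k" "k \<le> l"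
    and "poly_dominated_by (2 * (CARD('n) + 1)) (exp_weight (M l)) (exp_weight (M k))"
    using weight_matrix_poly_dominated_by_down[OF wm] by blast
  with poly_dominated_byD[OF _ exp_ereal_nonneg]
  show "\<exists>k. 0 < k \<and> k \<le> l \<and> (\<exists>B1\<ge>1. \<exists>B2\<ge>1. \<forall>t::real^'n.
    ereal ((1 + norm t) ^ (2 * (CARD('n) + 1))) * exp_weight (M l) t
      \<le> ereal B1 * exp_weight (M k) (B2 *\<^sub>R t))"
    by blast
qed

end
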